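(* Suppose $(\mathcal W,\mathcal W,\mu)$ is a reduced system of the FTvN system $(\mathcal V,\mathcal W,\lambda)$, where $\mathcal V$ and $\mathcal W$ are both finite dimensional. For $x,y\in\mathcal V$: $x\prec y$ in $\mathcal V$ (i.e. $x\in\operatorname{conv}[y]$) if and only if $\lambda(x)\prec\lambda(y)$ in $\mathcal W$. In particular, if $\mathcal V$ is a Euclidean Jordan algebra of rank $n$ with trace inner product and $\lambda:\mathcal V\to\mathbb R^n$ is its eigenvalue map, then $x\in\operatorname{conv}[y]$ if and only if $\lambda(x)\prec\lambda(y)$ in $\mathbb R^n$.
   Context: A Fan-Theobald-von Neumann (FTvN) system is a triple $(\mathcal V,\mathcal W,\lambda)$ where $\mathcal V,\mathcal W$ are real inner product spaces and $\lambda:\mathcal V\to\mathcal W$ is a map such that: (A1) $\|\lambda(x)\|=\|x\|$ for all $x$; (A2) $\langle x,y\rangle\le\langle\lambda(x),\lambda(y)\rangle$ for all $x,y$; (A3) for every $c\in\mathcal V$ and $q\in\lambda(\mathcal V)$ there exists $x$ with $\lambda(x)=q$ and $\langle c,x\rangle=\langle\lambda(c),\lambda(x)\rangle$. A FTvN system $(\mathcal W,\mathcal W,\mu)$ is a reduced system of $(\mathcal V,\mathcal W,\lambda)$ if (C1) $\mu\circ\lambda=\lambda$ and (C2) $\operatorname{ran}\mu\subseteq\operatorname{ran}\lambda$. $[y]=\{z\in\mathcal V:\lambda(z)=\lambda(y)\}$; in $\mathcal W$, $v\prec u$ iff $v\in\operatorname{conv}\{w:\mu(w)=\mu(u)\}$.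 For a Euclidean Jordan algebra, $\lambda(x)$ lists eigenvalues of $x$ in decreasing order, and for $u,v\in\mathbb R^n$, $u\prec v$ means $\sum_{i=1}^k u^\downarrow_i\le\sum_{i=1}^k v^\downarrow_i$ for all $k$ with equality at $k=n$. *)

theory Defs
  imports "HOL-Analysis.Analysis"
begin

definition FTvN :: "('v::real_inner \<Rightarrow> 'w::real_inner) \<Rightarrow> bool" where
  "FTvN lam \<longleftrightarrow>
     (\<forall>x. norm (lam x) = norm x) \<and>
     (\<forall>x y. inner x y \<le> inner (lam x) (lam y)) \<and>
     (\<forall>c q. q \<in> range lam \<longrightarrow> (\<exists>x. lam x = q \<and> inner c x = inner (lam c) (lam x)))"

definition reduced_system :: "('w::real_inner \<Rightarrow> 'w) \<Rightarrow> ('v::real_inner \<Rightarrow> 'w) \<Rightarrow> bool" where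
  "reduced_system mu lam \<longleftrightarrow> FTvN mu \<and> FTvN lam \<and> (\<forall>x. mu (lam x) = lam x) \<and> range mu \<subseteq> range lam"

definition eqclass :: "('v \<Rightarrow> 'w) \<Rightarrow> 'v \<Rightarrow> 'v set" where
  "eqclass lam y = {z. lam z = lam y}"

definition ftvn_majorized :: "('v::real_vector \<Rightarrow> 'w) \<Rightarrow> 'v \<Rightarrow> 'v \<Rightarrow> bool" where
  "ftvn_majorized lam x y \<longleftrightarrow> x \<in> convex hull (eqclass lam y)"

definition decr_list :: "(real, 'n::{finite,linorder}) vec \<Rightarrow> real list" where
  "decr_list u = rev (sort (map (\<lambda>i. u $ i) (sorted_list_of_set (UNIV :: 'n set))))"

definition vec_majorized :: "(real, 'n::{finite,linorder}) vec \<Rightarrow> (real, 'n) vec \<Rightarrow> bool" where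
  "vec_majorized u v \<longleftrightarrow>
     (\<forall>k. 1 \<le> k \<and> k \<le> length (decr_list u) \<longrightarrow> sum_list (take k (decr_list u)) \<le> sum_list (take k (decr_list v))) \<and>
     sum_list (decr_list u) = sum_list (decr_list v)"

definition EJA :: "('a::euclidean_space \<Rightarrow> 'a \<Rightarrow> 'a) \<Rightarrow> 'a \<Rightarrow> bool" where
  "EJA jp e \<longleftrightarrow>
     bilinear jp \<and>
     (\<forall>x y. jp x y = jp y x) \<and>
     (\<forall>x y. jp (jp x x) (jp x y) = jp x (jp (jp x x) y)) \<and>
     (\<forall>x. jp e x = x) \<and>
     (\<forall>x y z. inner (jp x y) z = inner y (jp x z))"

definition idempotent :: "('a \<Rightarrow> 'a \<Rightarrow> 'a) \<Rightarrow> 'a::zero \<Rightarrow> bool" where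
  "idempotent jp c \<longleftrightarrow> jp c c = c"

definition primitive_idempotent :: "('a \<Rightarrow> 'a \<Rightarrow> 'a) \<Rightarrow> 'a::real_vector \<Rightarrow> bool" where
  "primitive_idempotent jp c \<longleftrightarrow> idempotent jp c \<and> c \<noteq> 0 \<and>
     \<not> (\<exists>a b. idempotent jp a \<and> idempotent jp b \<and> a \<noteq> 0 \<and> b \<noteq> 0 \<and> c = a + b)"

definition jordan_frame :: "('a \<Rightarrow> 'a \<Rightarrow> 'a) \<Rightarrow> 'a::real_vector \<Rightarrow> 'i set \<Rightarrow> ('i \<Rightarrow> 'a) \<Rightarrow> bool" where
  "jordan_frame jp e I c \<longleftrightarrow> finite I \<and>
     (\<forall>i\<in>I. primitive_idempotent jp (c i)) \<and>
     (\<forall>i\<in>I. \<forall>j\<in>I. i \<noteq> j \<longrightarrow> jp (c i) (c j) = 0) \<and>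
     (\<Sum>i\<in>I. c i) = e"

definition EJA_rank :: "('a::euclidean_space \<Rightarrow> 'a \<Rightarrow> 'a) \<Rightarrow> 'a \<Rightarrow> nat \<Rightarrow> bool" where
  "EJA_rank jp e n \<longleftrightarrow> EJA jp e \<and> (\<exists>c :: nat \<Rightarrow> 'a. jordan_frame jp e {..<n} c)"

definition eigenvalue_map :: "('a::euclidean_space \<Rightarrow> 'a \<Rightarrow> 'a) \<Rightarrow> 'a \<Rightarrow> ('a \<Rightarrow> (real, 'n::{finite,linorder}) vec) \<Rightarrow> bool" where
  "eigenvalue_map jp e lam \<longleftrightarrow>
     (\<forall>x. (\<forall>i j. i \<le> j \<longrightarrow> lam x $ j \<le> lam x $ i) \<and>
          (\<exists>c. jordan_frame jp e (UNIV :: 'n set) c \<and> x = (\<Sum>i\<in>UNIV. (lam x $ i) *\<^sub>R c i)))"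

definition EJA_trace :: "('a \<Rightarrow> real^'n::finite) \<Rightarrow> 'a \<Rightarrow> real" where
  "EJA_trace lam x = (\<Sum>i\<in>UNIV. lam x $ i)"

end

theory Submission
  imports Defs
begin

text \<open>
  For an FTvN map lam, the support function of the compact convex set conv [y] is
  a \<mapsto> inner (lam a) (lam y): axiom (A2) bounds inner a z for z \<in> [y] by it and (A3) attains the
  bound. Separation therefore gives x \<in> conv [y] iff inner a x \<le> inner (lam a) (lam y) for all a,
  and by (A3) once more iff inner (lam a) (lam x) \<le> inner (lam a) (lam y) for all a. This criterion
  only involves the range of lam, which for a reduced system equals the range of mu; hence it
  reads the same for x in V and for lam x in W.

  The eigenvalue map of a Euclidean Jordan algebra is an FTvN map onto the decreasing vectors.
  The multiplication operator of an idempotent satisfies 2 L^3 = 3 L^2 - L and is therefore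
  positive semidefinite, so idempotents have nonnegative inner products and the matrix of inner
  products of two Jordan frames is doubly stochastic; (A2) then follows by Abel summation, and it
  forces the eigenvalues of a combination of a Jordan frame with decreasing coefficients to be those
  coefficients, which gives (A3). Finally, for decreasing vectors u and v, inner l u \<le> inner l v
  for all decreasing l is majorization: the decreasing l are generated by the indicators of the
  initial segments together with the constants 1 and -1.
\<close>

section \<open>FTvN systems\<close>

lemma mem_closed_convex_hull_iff:
  fixes K :: "'a::euclidean_space set"
  assumes "closed (convex hull K)"
  shows "x \<in> convex hull K \<longleftrightarrow> (\<forall>a. \<exists>z\<in>K. inner a x \<le> inner a z)"
proof
  assume x: "x \<in> convex hull K"
  show "\<forall>a. \<exists>z\<in>K. inner a x \<le> inner a z"
  proof (rule ccontr)
    assume "\<not> ?thesis"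
    then obtain a where "K \<subseteq> {u. inner a u < inner a x}"
      by (auto simp: not_le)
    then have "convex hull K \<subseteq> {u. inner a u < inner a x}"
      by (simp add: hull_minimal convex_halfspace_lt)
    with x show False by auto
  qed
next
  assume supp: "\<forall>a. \<exists>z\<in>K. inner a x \<le> inner a z"
  show "x \<in> convex hull K"
  proof (rule ccontr)
    assume "x \<notin> convex hull K"
    then obtain a b where "inner a x < b" "\<forall>z\<in>convex hull K. b < inner a z"
      using separating_hyperplane_closed_point[OF convex_convex_hull assms] by blast
    moreover obtain z where "z \<in> K" "inner (- a) x \<le> inner (- a) z"
      using supp by blast
    ultimately show False
      using hull_subset[of K convex] by fastforce
  qed
qed

lemma FTvN_norm: "FTvN lam \<Longrightarrow> norm (lam x) = norm x"
  by (simp add: FTvN_def)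

lemma FTvN_inner_le: "FTvN lam \<Longrightarrow> inner x y \<le> inner (lam x) (lam y)"
  by (simp add: FTvN_def)

lemma FTvN_inner_attained:
  "FTvN lam \<Longrightarrow> q \<in> range lam \<Longrightarrow> \<exists>x. lam x = q \<and> inner c x = inner (lam c) (lam x)"
  by (simp add: FTvN_def)

lemma FTvN_norm_diff_le:
  assumes "FTvN lam"
  shows "norm (lam a - lam b) \<le> norm (a - b)"
proof -
  have "(norm (lam a - lam b))\<^sup>2 = (norm (lam a))\<^sup>2 + (norm (lam b))\<^sup>2 - 2 * inner (lam a) (lam b)"
    by (simp add: power2_norm_eq_inner algebra_simps inner_commute)
  also have "\<dots> \<le> (norm a)\<^sup>2 + (norm b)\<^sup>2 - 2 * inner a b"
    using assms by (simp add: FTvN_norm FTvN_inner_le)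
  also have "\<dots> = (norm (a - b))\<^sup>2"
    by (simp add: power2_norm_eq_inner algebra_simps inner_commute)
  finally show ?thesis
    using power2_le_imp_le by fastforce
qed

lemma compact_eqclass:
  fixes lam :: "'v::euclidean_space \<Rightarrow> 'w::real_inner"
  assumes "FTvN lam"
  shows "compact (eqclass lam y)"
proof -
  have "continuous_on UNIV lam"
    by (rule lipschitz_on_continuous_on[of 1], rule lipschitz_onI)
      (use FTvN_norm_diff_le[OF assms] in \<open>auto simp: dist_norm\<close>)
  then have "closed (eqclass lam y)"
    unfolding eqclass_def by (rule closed_Collect_eq[OF _ continuous_on_const])
  moreover have "bounded (eqclass lam y)"
    unfolding bounded_iff eqclass_def by (metis FTvN_norm[OF assms] mem_Collect_eq order_refl)
  ultimately show ?thesis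
    by (simp add: compact_eq_bounded_closed)
qed

lemma FTvN_ex_eqclass_inner_ge_iff:
  assumes "FTvN lam"
  shows "(\<exists>z\<in>eqclass lam y. t \<le> inner a z) \<longleftrightarrow> t \<le> inner (lam a) (lam y)"
proof
  assume "\<exists>z\<in>eqclass lam y. t \<le> inner a z"
  then obtain z where "lam z = lam y" "t \<le> inner a z"
    by (auto simp: eqclass_def)
  then show "t \<le> inner (lam a) (lam y)"
    using FTvN_inner_le[OF assms, of a z] by simp
next
  assume t: "t \<le> inner (lam a) (lam y)"
  obtain z where "lam z = lam y" "inner a z = inner (lam a) (lam z)"
    using FTvN_inner_attained[OF assms, of "lam y" a] by auto
  with t show "\<exists>z\<in>eqclass lam y. t \<le> inner a z"
    by (auto simp: eqclass_def)
qed

lemma ftvn_majorized_iff_inner_le: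
  fixes lam :: "'v::euclidean_space \<Rightarrow> 'w::real_inner"
  assumes "FTvN lam"
  shows "ftvn_majorized lam x y \<longleftrightarrow> (\<forall>a. inner (lam a) (lam x) \<le> inner (lam a) (lam y))"
proof -
  have "closed (convex hull eqclass lam y)"
    by (rule compact_imp_closed[OF compact_convex_hull[OF compact_eqclass[OF assms]]])
  then have "ftvn_majorized lam x y \<longleftrightarrow> (\<forall>a. \<exists>z\<in>eqclass lam y. inner a x \<le> inner a z)"
    unfolding ftvn_majorized_def by (rule mem_closed_convex_hull_iff)
  also have "\<dots> \<longleftrightarrow> (\<forall>a. inner a x \<le> inner (lam a) (lam y))"
    by (simp only: FTvN_ex_eqclass_inner_ge_iff[OF assms])
  also have "\<dots> \<longleftrightarrow> (\<forall>a. inner (lam a) (lam x) \<le> inner (lam a) (lam y))"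
  proof (intro iffI allI)
    fix a
    assume le: "\<forall>a. inner a x \<le> inner (lam a) (lam y)"
    obtain a' where "lam a' = lam a" "inner x a' = inner (lam x) (lam a')"
      using FTvN_inner_attained[OF assms, of "lam a" x] by auto
    then show "inner (lam a) (lam x) \<le> inner (lam a) (lam y)"
      using le[rule_format, of a'] by (simp add: inner_commute)
  next
    fix a
    assume "\<forall>a. inner (lam a) (lam x) \<le> inner (lam a) (lam y)"
    then show "inner a x \<le> inner (lam a) (lam y)"
      using FTvN_inner_le[OF assms, of a x] by (meson order_trans)
  qed
  finally show ?thesis .
qed

lemma reduced_system_range:
  assumes "reduced_system mu lam"
  shows "range mu = range lam"
proof
  show "range mu \<subseteq> range lam"
    using assms by (simp add: reduced_system_def)
  show "range lam \<subseteq> range mu"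
  proof
    fix q assume "q \<in> range lam"
    then obtain x where "q = lam x" by blast
    then have "q = mu (lam x)"
      using assms by (simp add: reduced_system_def)
    then show "q \<in> range mu" by blast
  qed
qed

lemma reduced_system_majorized_iff:
  fixes lam :: "'v::euclidean_space \<Rightarrow> 'w::euclidean_space"
  assumes "reduced_system mu lam"
  shows "ftvn_majorized lam x y \<longleftrightarrow> ftvn_majorized mu (lam x) (lam y)"
proof -
  have lam: "FTvN lam" and mu: "FTvN mu" and mu_lam: "\<And>x. mu (lam x) = lam x"
    using assms by (auto simp: reduced_system_def)
  have "ftvn_majorized mu (lam x) (lam y) \<longleftrightarrow> (\<forall>w\<in>range mu. inner w (lam x) \<le> inner w (lam y))"
    unfolding ftvn_majorized_iff_inner_le[OF mu] mu_lam by blast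
  also have "\<dots> \<longleftrightarrow> ftvn_majorized lam x y"
    unfolding reduced_system_range[OF assms] ftvn_majorized_iff_inner_le[OF lam] by blast
  finally show ?thesis ..
qed

section \<open>Majorization of decreasing vectors\<close>

lemma sum_by_parts:
  fixes f d :: "nat \<Rightarrow> real"
  shows "(\<Sum>i<Suc m. f i * d i) =
    f m * (\<Sum>i<Suc m. d i) + (\<Sum>i<m. (f i - f (Suc i)) * (\<Sum>j<Suc i. d j))"
  by (induction m) (simp_all add: algebra_simps)

lemma abel_inequality:
  fixes f d :: "nat \<Rightarrow> real"
  assumes f_decr: "\<And>i. Suc i < n \<Longrightarrow> f (Suc i) \<le> f i"
    and partial_nonneg: "\<And>k. k \<le> n \<Longrightarrow> 0 \<le> (\<Sum>i<k. d i)"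
    and total_zero: "(\<Sum>i<n. d i) = 0"
  shows "0 \<le> (\<Sum>i<n. f i * d i)"
proof (cases n)
  case (Suc m)
  have "0 \<le> (f i - f (Suc i)) * (\<Sum>j<Suc i. d j)" if "i < m" for i
    using that Suc f_decr[of i] partial_nonneg[of "Suc i"] by (intro mult_nonneg_nonneg) auto
  then have "0 \<le> (\<Sum>i<m. (f i - f (Suc i)) * (\<Sum>j<Suc i. d j))"
    by (intro sum_nonneg) simp
  then show ?thesis
    using Suc total_zero sum_by_parts[of f d m] by simp
qed simp

definition initial_segment :: "nat \<Rightarrow> 'n::{finite,linorder} set" where
  "initial_segment k = set (take k (sorted_list_of_set UNIV))"

lemma sum_initial_segment:
  "sum g (initial_segment k :: 'n::{finite,linorder} set) =
    (\<Sum>m<min k CARD('n). g (sorted_list_of_set UNIV ! m))"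
proof -
  have "sum g (initial_segment k) = sum_list (map g (take k (sorted_list_of_set (UNIV :: 'n set))))"
    by (simp add: initial_segment_def sum_list_distinct_conv_sum_set)
  also have "\<dots> = (\<Sum>m<min k CARD('n). g (sorted_list_of_set UNIV ! m))"
    by (simp add: sum_list_sum_nth atLeast0LessThan min.commute)
  finally show ?thesis .
qed

lemma initial_segment_ge_card:
  "CARD('n) \<le> k \<Longrightarrow> initial_segment k = (UNIV :: 'n::{finite,linorder} set)"
  by (simp add: initial_segment_def)

lemma sum_UNIV_sorted_list:
  "sum g (UNIV :: 'n::{finite,linorder} set) = (\<Sum>m<CARD('n). g (sorted_list_of_set UNIV ! m))"
  using sum_initial_segment[of g "CARD('n)"] initial_segment_ge_card[where 'n='n, of "CARD('n)"]
  by simp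

lemma initial_segment_downward_closed:
  fixes i j :: "'n::{finite,linorder}"
  assumes "i \<in> initial_segment k" "j \<le> i"
  shows "j \<in> initial_segment k"
proof -
  let ?L = "sorted_list_of_set (UNIV :: 'n set)"
  obtain p where p: "p < k" "p < length ?L" "i = ?L ! p"
    using assms(1) by (auto simp: initial_segment_def in_set_conv_nth)
  obtain q where q: "q < length ?L" "j = ?L ! q"
    by (metis UNIV_I finite set_sorted_list_of_set in_set_conv_nth)
  have "q \<le> p"
    using assms(2) p q sorted_wrt_nth_less[OF strict_sorted_list_of_set, of p q] by force
  then show ?thesis
    using p q by (auto simp: initial_segment_def in_set_conv_nth intro!: exI[of _ q])
qed

lemma antimono_initial_segment:
  assumes "antimono a" "j \<in> initial_segment k" "j' \<notin> initial_segment k"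
  shows "a j' \<le> a j"
proof -
  have "j \<le> j'"
    using assms(2,3) initial_segment_downward_closed[of j k j'] by force
  then show ?thesis
    by (rule antimonoD[OF assms(1)])
qed

lemma sum_mult_le_if_initial_sums_le:
  fixes l v w :: "'n::{finite,linorder} \<Rightarrow> real"
  assumes "antimono l"
    and initial_le: "\<And>k. sum v (initial_segment k) \<le> sum w (initial_segment k)"
    and total_eq: "sum v UNIV = sum w UNIV"
  shows "(\<Sum>i\<in>UNIV. l i * v i) \<le> (\<Sum>i\<in>UNIV. l i * w i)"
proof -
  let ?L = "sorted_list_of_set (UNIV :: 'n set)"
  define d where "d m = w (?L ! m) - v (?L ! m)" for m
  have "0 \<le> (\<Sum>m<CARD('n). l (?L ! m) * d m)"
  proof (rule abel_inequality)
    show "l (?L ! Suc m) \<le> l (?L ! m)" if "Suc m < CARD('n)" for m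
      using that sorted_wrt_nth_less[OF strict_sorted_list_of_set, of m "Suc m" "UNIV :: 'n set"]
      by (intro antimonoD[OF assms(1)]) simp
    show "0 \<le> (\<Sum>m<k. d m)" if "k \<le> CARD('n)" for k
      using initial_le[of k] that
      by (simp add: d_def sum_subtractf sum_initial_segment min_absorb1)
    show "(\<Sum>m<CARD('n). d m) = 0"
      using total_eq by (simp add: d_def sum_subtractf sum_UNIV_sorted_list)
  qed
  then show ?thesis
    by (simp add: d_def sum_UNIV_sorted_list[of "\<lambda>i. l i * _ i"] algebra_simps sum_subtractf)
qed

lemma decr_list_antimono:
  fixes u :: "(real, 'n::{finite,linorder}) vec"
  assumes "antimono (($) u)"
  shows "decr_list u = map (($) u) (sorted_list_of_set UNIV)"
proof -
  let ?l = "map (($) u) (sorted_list_of_set (UNIV :: 'n set))"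
  have "sorted_wrt (\<lambda>i j. u $ j \<le> u $ i) (sorted_list_of_set (UNIV :: 'n set))"
    by (rule sorted_wrt_mono_rel[OF _ strict_sorted_list_of_set])
      (simp add: antimonoD[OF assms] less_imp_le)
  then have "sorted_wrt (\<ge>) ?l"
    by (simp add: sorted_wrt_map)
  then have "sort ?l = rev ?l"
    by (intro properties_for_sort) (simp_all add: sorted_wrt_rev)
  then show ?thesis
    by (simp add: decr_list_def)
qed

lemma vec_majorized_iff_initial_sums:
  fixes u v :: "(real, 'n::{finite,linorder}) vec"
  assumes "antimono (($) u)" "antimono (($) v)"
  shows "vec_majorized u v \<longleftrightarrow>
    (\<forall>k. sum (($) u) (initial_segment k) \<le> sum (($) v) (initial_segment k)) \<and>
    sum (($) u) UNIV = sum (($) v) UNIV"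
proof -
  have sum_take: "sum_list (take k (map f (sorted_list_of_set UNIV))) = sum f (initial_segment k)"
    for k and f :: "'n \<Rightarrow> real"
    by (simp add: take_map initial_segment_def sum_list_distinct_conv_sum_set)
  have sum_all: "sum_list (map f (sorted_list_of_set UNIV)) = sum f (UNIV :: 'n set)" for f
    by (simp add: sum_list_distinct_conv_sum_set)
  have "sum (($) u) (initial_segment k) \<le> sum (($) v) (initial_segment k)"
    if "\<forall>k. 1 \<le> k \<and> k \<le> CARD('n) \<longrightarrow>
          sum (($) u) (initial_segment k) \<le> sum (($) v) (initial_segment k)"
      and "sum (($) u) UNIV = sum (($) v) UNIV" for k
    using that initial_segment_ge_card[where 'n='n, of k]
    by (cases "k = 0"; cases "k \<le> CARD('n)") (auto simp: initial_segment_def)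
  then show ?thesis
    unfolding vec_majorized_def decr_list_antimono[OF assms(1)] decr_list_antimono[OF assms(2)]
      sum_take sum_all
    by auto
qed

lemma vec_majorized_iff_inner_le:
  fixes u v :: "(real, 'n::{finite,linorder}) vec"
  assumes "antimono (($) u)" "antimono (($) v)"
  shows "vec_majorized u v \<longleftrightarrow> (\<forall>l. antimono (($) l) \<longrightarrow> inner l u \<le> inner l v)"
proof
  assume "vec_majorized u v"
  then show "\<forall>l. antimono (($) l) \<longrightarrow> inner l u \<le> inner l v"
    unfolding vec_majorized_iff_initial_sums[OF assms] inner_vec_def
    by (auto intro: sum_mult_le_if_initial_sums_le)
next
  assume le: "\<forall>l. antimono (($) l) \<longrightarrow> inner l u \<le> inner l v"
  have "sum (($) u) (initial_segment k) \<le> sum (($) v) (initial_segment k)" for k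
  proof -
    define l :: "(real, 'n) vec" where "l = (\<chi> i. if i \<in> initial_segment k then 1 else 0)"
    have "antimono (($) l)"
      by (auto simp: l_def intro!: antimonoI dest: initial_segment_downward_closed)
    moreover have "inner l w = sum (($) w) (initial_segment k)" for w
      by (simp add: l_def inner_vec_def if_distrib[of "\<lambda>c. c * _"] sum.If_cases)
    ultimately show ?thesis
      using le by metis
  qed
  moreover have "sum (($) u) UNIV = sum (($) v) UNIV"
  proof -
    have const: "inner (vec c) w = c * sum (($) w) UNIV" for c and w :: "(real, 'n) vec"
      by (simp add: inner_vec_def sum_distrib_left)
    have "inner (vec c) u \<le> inner (vec c) v" for c
      by (rule le[rule_format]) (simp add: antimono_def)
    from this[of 1] this[of "-1"] show ?thesis
      unfolding const by linarith
  qed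
  ultimately show "vec_majorized u v"
    unfolding vec_majorized_iff_initial_sums[OF assms] by blast
qed

lemma sum_weighted_le_sum_top:
  fixes a w :: "'n::finite \<Rightarrow> real"
  assumes w0: "\<And>j. 0 \<le> w j" and w1: "\<And>j. w j \<le> 1" and w_sum: "(\<Sum>j\<in>UNIV. w j) = real (card S)"
    and top: "\<And>j j'. j \<in> S \<Longrightarrow> j' \<notin> S \<Longrightarrow> a j' \<le> a j"
  shows "(\<Sum>j\<in>UNIV. a j * w j) \<le> (\<Sum>j\<in>S. a j)"
proof (cases "S = {}")
  case True
  then have "\<forall>j\<in>UNIV. w j = 0"
    using w_sum w0 by (simp add: sum_nonneg_eq_0_iff)
  then show ?thesis
    using True by simp
next
  case False
  define t where "t = Min (a ` S)"
  have t_le: "t \<le> a j" if "j \<in> S" for j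
    using that by (simp add: t_def)
  have le_t: "a j' \<le> t" if "j' \<notin> S" for j'
    using Min_in[of "a ` S"] False top that by (auto simp: t_def)
  have split: "(\<Sum>j\<in>UNIV. f j) = (\<Sum>j\<in>S. f j) + (\<Sum>j\<in>-S. f j)" for f :: "'n \<Rightarrow> real"
    by (metis Compl_eq_Diff_UNIV add.commute finite sum.subset_diff top_greatest)
  have "(\<Sum>j\<in>UNIV. a j * w j) - (\<Sum>j\<in>S. a j) = (\<Sum>j\<in>S. a j * (w j - 1)) + (\<Sum>j\<in>-S. a j * w j)"
    using split[of "\<lambda>j. a j * w j"] by (simp add: algebra_simps sum_subtractf)
  also have "\<dots> \<le> (\<Sum>j\<in>S. t * (w j - 1)) + (\<Sum>j\<in>-S. t * w j)"
    using t_le le_t w0 w1 by (intro add_mono sum_mono) (auto intro: mult_right_mono_neg mult_right_mono)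
  also have "\<dots> = t * ((\<Sum>j\<in>UNIV. w j) - real (card S))"
    using split[of w] by (simp add: sum_distrib_left[symmetric] sum_subtractf algebra_simps)
  also have "\<dots> = 0"
    using w_sum by simp
  finally show ?thesis
    by simp
qed

section \<open>Idempotents and Jordan frames\<close>

locale jordan_inner_algebra =
  fixes jp :: "'a::real_inner \<Rightarrow> 'a \<Rightarrow> 'a"
  assumes bilinear_jp: "bilinear jp"
    and jp_commute: "jp x y = jp y x"
    and jordan_identity: "jp (jp x x) (jp x y) = jp x (jp (jp x x) y)"
    and inner_jp_assoc: "inner (jp x y) z = inner y (jp x z)"
begin

lemmas jp_add = bilinear_ladd[OF bilinear_jp] bilinear_radd[OF bilinear_jp]
lemmas jp_diff = bilinear_lsub[OF bilinear_jp] bilinear_rsub[OF bilinear_jp]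
lemmas jp_scaleR = bilinear_lmul[OF bilinear_jp] bilinear_rmul[OF bilinear_jp]

lemma idempotent_cube:
  assumes cc: "jp c c = c"
  shows "2 *\<^sub>R jp c (jp c (jp c z)) = 3 *\<^sub>R jp c (jp c z) - jp c z"
proof -
  \<comment> \<open>?E (c + z) - ?E (c - z) - 2 ?E z is twice the coefficient of t in ?E (c + t z)\<close>
  let ?E = "\<lambda>x. jp (jp x x) (jp x c) - jp x (jp (jp x x) c)"
  have E: "?E x = 0" for x
    by (simp add: jordan_identity)
  have "inner w (?E (c + z) - ?E (c - z) - 2 *\<^sub>R ?E z) =
    2 * inner w (3 *\<^sub>R jp c (jp c z) - jp c z - 2 *\<^sub>R jp c (jp c (jp c z)))" for w
    by (simp add: jp_add jp_diff jp_scaleR cc jp_commute[of z c] jp_commute[of "jp c z" c]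
        jp_commute[of "jp z z" c] jp_commute[of z "jp c z"] inner_add_right inner_diff_right algebra_simps)
  then have "inner w (3 *\<^sub>R jp c (jp c z) - jp c z - 2 *\<^sub>R jp c (jp c (jp c z))) = 0" for w
    by (simp add: E)
  then show ?thesis
    by (metis eq_iff_diff_eq_0 inner_eq_zero_iff)
qed

lemma idempotent_inner_jp_self_nonneg:
  assumes cc: "jp c c = c"
  shows "0 \<le> inner (jp c z) z"
proof -
  \<comment> \<open>With m_k = inner z (L^k z) for L = jp c, the cube identity and norm (L z - L^2 z) \<ge> 0
    give m_1 \<ge> m_2 = (norm (L z))^2.\<close>
  define z1 where "z1 = jp c z"
  define z2 where "z2 = jp c z1"
  define z3 where "z3 = jp c z2"
  define z4 where "z4 = jp c z3"
  have cube1: "2 *\<^sub>R z3 = 3 *\<^sub>R z2 - z1" and cube2: "2 *\<^sub>R z4 = 3 *\<^sub>R z3 - z2"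
    using idempotent_cube[OF cc, of z] idempotent_cube[OF cc, of z1] by (simp_all add: z1_def z2_def z3_def z4_def)
  have "inner z1 z1 = inner z z2" "inner z1 z2 = inner z z3" "inner z2 z2 = inner z z4"
    using inner_jp_assoc[of c z z1] inner_jp_assoc[of c z z2] inner_jp_assoc[of c z1 z2] inner_jp_assoc[of c z z3]
    by (simp_all add: z1_def z2_def z3_def z4_def inner_commute)
  moreover have "2 * inner z z3 = 3 * inner z z2 - inner z z1" "2 * inner z z4 = 3 * inner z z3 - inner z z2"
    using arg_cong[OF cube1, of "inner z"] arg_cong[OF cube2, of "inner z"] by (simp_all add: inner_diff_right)
  moreover have "0 \<le> inner (z1 - z2) (z1 - z2)" "0 \<le> inner z1 z1"
    by simp_all
  ultimately show ?thesis
    by (simp add: z1_def inner_commute inner_diff_left inner_diff_right)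
qed

lemma inner_idempotents_nonneg:
  assumes "jp c c = c" "jp d d = d"
  shows "0 \<le> inner c d"
proof -
  have "inner c d = inner (jp c d) d"
    using assms(2) inner_jp_assoc[of d d c] by (simp add: jp_commute inner_commute)
  then show ?thesis
    using idempotent_inner_jp_self_nonneg[OF assms(1)] by simp
qed

lemma jp_sum_left: "jp (sum f A) y = (\<Sum>i\<in>A. jp (f i) y)"
  using bilinear_jp linear_sum[of "\<lambda>x. jp x y" f A] by (simp add: bilinear_def)

lemma jp_sum_right: "jp y (sum f A) = (\<Sum>i\<in>A. jp y (f i))"
  using jp_sum_left[of f A y] by (simp add: jp_commute)

end

locale spectral_jordan_algebra = jordan_inner_algebra jp
  for jp :: "'a::euclidean_space \<Rightarrow> 'a \<Rightarrow> 'a" +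
  fixes e :: 'a and lam :: "'a \<Rightarrow> (real, 'n::{finite,linorder}) vec"
  assumes jp_unit: "jp e x = x"
    and eigenvalue_map: "eigenvalue_map jp e lam"
    and inner_trace: "inner u v = EJA_trace lam (jp u v)"
begin

lemma antimono_lam: "antimono (($) (lam x))"
  using eigenvalue_map[unfolded eigenvalue_map_def, THEN spec[of _ x], THEN conjunct1]
  by (simp add: antimono_def)

text \<open>Uses of the decomposition below first name lam x: as a rewrite rule the equation would loop,
  since x occurs on its right-hand side.\<close>

lemma spectral_decomposition:
  obtains c where "jordan_frame jp e UNIV c" "x = (\<Sum>i\<in>UNIV. lam x $ i *\<^sub>R c i)"
  using eigenvalue_map[unfolded eigenvalue_map_def, THEN spec[of _ x], THEN conjunct2] by blast

lemma inner_unit: "inner e x = (\<Sum>i\<in>UNIV. lam x $ i)"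
  using inner_trace[of e x] by (simp add: jp_unit EJA_trace_def)

lemma inner_eq_inner_unit_jp: "inner u v = inner e (jp u v)"
  using inner_trace[of u v] inner_unit[of "jp u v"] by (simp add: EJA_trace_def)

context
  fixes c :: "'n \<Rightarrow> 'a"
  assumes frame: "jordan_frame jp e UNIV c"
begin

lemma frame_idempotent: "jp (c i) (c i) = c i"
  using frame by (simp add: jordan_frame_def primitive_idempotent_def idempotent_def)

lemma frame_jp: "jp (c j) (c k) = (if k = j then c j else 0)"
  using frame frame_idempotent by (auto simp: jordan_frame_def)

lemma frame_sum: "(\<Sum>i\<in>UNIV. c i) = e"
  using frame by (simp add: jordan_frame_def)

lemma frame_orthogonal: "i \<noteq> j \<Longrightarrow> inner (c i) (c j) = 0"
  using inner_eq_inner_unit_jp[of "c i" "c j"] frame_jp[of i j] by simp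

lemma frame_inner_self_pos: "0 < inner (c i) (c i)"
  using frame by (simp add: jordan_frame_def primitive_idempotent_def)

lemma jp_frame_combinations:
  "jp (\<Sum>j\<in>UNIV. a j *\<^sub>R c j) (\<Sum>j\<in>UNIV. b j *\<^sub>R c j) = (\<Sum>j\<in>UNIV. (a j * b j) *\<^sub>R c j)"
  by (simp add: jp_sum_left jp_sum_right jp_scaleR frame_jp if_distrib mult.commute cong: if_cong)

lemma inner_frame_combination_frame_weighted:
  "inner (\<Sum>j\<in>UNIV. a j *\<^sub>R c j) (c k) = a k * inner (c k) (c k)"
proof -
  have "(\<Sum>j\<in>UNIV. a j * inner (c j) (c k)) = (\<Sum>j\<in>UNIV. if j = k then a k * inner (c k) (c k) else 0)"
    by (rule sum.cong) (auto simp: frame_orthogonal)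
  then show ?thesis
    by (simp add: inner_sum_left)
qed

lemma idempotent_frame_subset_sum:
  "jp (\<Sum>j\<in>T. c j) (\<Sum>j\<in>T. c j) = (\<Sum>j\<in>T. c j)"
  by (simp add: jp_sum_left jp_sum_right frame_jp)

lemma frame_subset_sum_nonzero:
  assumes "k \<in> T"
  shows "(\<Sum>j\<in>T. c j) \<noteq> 0"
proof -
  have "(\<Sum>j\<in>T. inner (c j) (c k)) = (\<Sum>j\<in>T. if j = k then inner (c k) (c k) else 0)"
    by (rule sum.cong) (auto simp: frame_orthogonal)
  then have "inner (\<Sum>j\<in>T. c j) (c k) = inner (c k) (c k)"
    using assms by (simp add: inner_sum_left)
  then show ?thesis
    using frame_inner_self_pos[of k] by auto
qed

lemma idempotent_frame_coefficients:
  assumes "jp p p = p" "p = (\<Sum>j\<in>UNIV. a j *\<^sub>R c j)"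
  shows "a k = 0 \<or> a k = 1"
proof -
  have "inner (\<Sum>j\<in>UNIV. (a j * a j) *\<^sub>R c j) (c k) = inner (\<Sum>j\<in>UNIV. a j *\<^sub>R c j) (c k)"
    using assms by (simp add: jp_frame_combinations)
  then have "a k * a k * inner (c k) (c k) = a k * inner (c k) (c k)"
    by (simp only: inner_frame_combination_frame_weighted)
  then have "a k * a k = a k"
    using frame_inner_self_pos[of k] by simp
  then show ?thesis
    by (metis mult_cancel_right2 mult_zero_left)
qed

end

lemma primitive_idempotent_trace:
  assumes prim: "primitive_idempotent jp p"
  shows "inner e p = 1"
proof -
  obtain d where d: "jordan_frame jp e UNIV d" and p_d: "p = (\<Sum>j\<in>UNIV. lam p $ j *\<^sub>R d j)"
    by (rule spectral_decomposition)
  have pp: "jp p p = p" and p0: "p \<noteq> 0"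
    using prim by (simp_all add: primitive_idempotent_def idempotent_def)
  define S where "S = {j. lam p $ j = 1}"
  have coeff: "lam p $ j = (if j \<in> S then 1 else 0)" for j
    using idempotent_frame_coefficients[OF d pp p_d, of j] by (auto simp: S_def)
  have p_S: "p = (\<Sum>j\<in>S. d j)"
    by (subst p_d) (simp add: coeff if_distrib[of "\<lambda>t. t *\<^sub>R _"] sum.If_cases)
  obtain k where k: "k \<in> S"
    using p0 p_S by fastforce
  have "S = {k}"
  proof (rule ccontr)
    assume "S \<noteq> {k}"
    then obtain j where "j \<in> S - {k}"
      using k by blast
    moreover have "p = d k + (\<Sum>j\<in>S - {k}. d j)"
      using k p_S by (simp add: sum.remove)
    ultimately show False
      using prim idempotent_frame_subset_sum[OF d, of "{k}"] idempotent_frame_subset_sum[OF d, of "S - {k}"]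
        frame_subset_sum_nonzero[OF d, of k "{k}"] frame_subset_sum_nonzero[OF d, of j "S - {k}"]
      unfolding primitive_idempotent_def idempotent_def by auto
  qed
  then show ?thesis
    by (simp add: inner_unit coeff)
qed

context
  fixes c :: "'n \<Rightarrow> 'a"
  assumes frame: "jordan_frame jp e UNIV c"
begin

lemma frame_trace: "inner e (c k) = 1"
  using frame by (simp add: jordan_frame_def primitive_idempotent_trace)

lemma frame_norm: "inner (c k) (c k) = 1"
  using inner_eq_inner_unit_jp[of "c k" "c k"] by (simp add: frame_idempotent[OF frame] frame_trace)

lemma inner_frame_combination_frame: "inner (\<Sum>j\<in>UNIV. a j *\<^sub>R c j) (c k) = a k"
  by (simp add: inner_frame_combination_frame_weighted[OF frame] frame_norm)

lemma inner_frame_combinations: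
  "inner (\<Sum>j\<in>UNIV. a j *\<^sub>R c j) (\<Sum>j\<in>UNIV. b j *\<^sub>R c j) = (\<Sum>j\<in>UNIV. a j * b j)"
  by (simp add: inner_sum_right inner_frame_combination_frame mult.commute)

end

lemma inner_frames_nonneg:
  fixes c d :: "'n \<Rightarrow> 'a"
  assumes "jordan_frame jp e UNIV c" "jordan_frame jp e UNIV d"
  shows "0 \<le> inner (c j) (d i)"
  using assms by (intro inner_idempotents_nonneg) (simp_all add: frame_idempotent)

lemma sum_inner_frame_eq_one:
  fixes c d :: "'n \<Rightarrow> 'a"
  assumes "jordan_frame jp e UNIV c" "jordan_frame jp e UNIV d"
  shows "(\<Sum>i\<in>UNIV. inner (c j) (d i)) = 1"
  using frame_sum[OF assms(2)] frame_trace[OF assms(1)]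
  by (simp add: inner_sum_right[symmetric] inner_commute)

lemma sum_inner_frame_combination_le_top:
  fixes a :: "'n \<Rightarrow> real" and c d :: "'n \<Rightarrow> 'a"
  assumes c: "jordan_frame jp e UNIV c" and d: "jordan_frame jp e UNIV d"
    and card: "card T = card S" and top: "\<And>j j'. j \<in> S \<Longrightarrow> j' \<notin> S \<Longrightarrow> a j' \<le> a j"
  shows "(\<Sum>i\<in>T. inner (\<Sum>j\<in>UNIV. a j *\<^sub>R c j) (d i)) \<le> (\<Sum>j\<in>S. a j)"
proof -
  define w where "w j = (\<Sum>i\<in>T. inner (c j) (d i))" for j
  have "(\<Sum>i\<in>T. inner (\<Sum>j\<in>UNIV. a j *\<^sub>R c j) (d i)) = (\<Sum>j\<in>UNIV. a j * w j)"
    by (simp add: w_def inner_sum_left sum_distrib_left sum.swap[of _ T])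
  also have "\<dots> \<le> (\<Sum>j\<in>S. a j)"
  proof (rule sum_weighted_le_sum_top[OF _ _ _ top])
    show "0 \<le> w j" for j
      unfolding w_def by (intro sum_nonneg inner_frames_nonneg[OF c d])
    show "w j \<le> 1" for j
      using sum_mono2[of UNIV T "\<lambda>i. inner (c j) (d i)"] inner_frames_nonneg[OF c d]
      by (simp add: w_def sum_inner_frame_eq_one[OF c d])
    have "(\<Sum>j\<in>UNIV. w j) = (\<Sum>i\<in>T. inner (\<Sum>j\<in>UNIV. c j) (d i))"
      by (simp add: w_def inner_sum_left sum.swap[of _ T])
    then show "(\<Sum>j\<in>UNIV. w j) = real (card S)"
      by (simp add: frame_sum[OF c] frame_trace[OF d] card)
  qed
  finally show ?thesis .
qed

lemma inner_frame_combinations_le: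
  fixes l b :: "'n \<Rightarrow> real" and f c :: "'n \<Rightarrow> 'a"
  assumes f: "jordan_frame jp e UNIV f" and c: "jordan_frame jp e UNIV c"
    and "antimono l" "antimono b"
  shows "inner (\<Sum>i\<in>UNIV. l i *\<^sub>R f i) (\<Sum>j\<in>UNIV. b j *\<^sub>R c j) \<le> (\<Sum>i\<in>UNIV. l i * b i)"
proof -
  let ?y = "\<Sum>j\<in>UNIV. b j *\<^sub>R c j"
  have "inner (\<Sum>i\<in>UNIV. l i *\<^sub>R f i) ?y = (\<Sum>i\<in>UNIV. l i * inner (f i) ?y)"
    by (simp only: inner_sum_left inner_scaleR_left)
  also have "\<dots> \<le> (\<Sum>i\<in>UNIV. l i * b i)"
  proof (rule sum_mult_le_if_initial_sums_le[OF assms(3)])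
    show "(\<Sum>i\<in>initial_segment k. inner (f i) ?y) \<le> sum b (initial_segment k)" for k
      using sum_inner_frame_combination_le_top[OF c f refl antimono_initial_segment[OF assms(4)]]
      by (simp add: inner_commute)
    have "(\<Sum>i\<in>UNIV. inner (f i) ?y) = inner e ?y"
      by (simp only: inner_sum_left[symmetric] frame_sum[OF f])
    also have "\<dots> = sum b UNIV"
      by (simp add: inner_sum_right frame_trace[OF c])
    finally show "(\<Sum>i\<in>UNIV. inner (f i) ?y) = sum b UNIV" .
  qed
  finally show ?thesis .
qed

lemma lam_frame_combination:
  fixes c :: "'n \<Rightarrow> 'a" and b :: "'n \<Rightarrow> real"
  assumes c: "jordan_frame jp e UNIV c" and "antimono b"
  shows "lam (\<Sum>j\<in>UNIV. b j *\<^sub>R c j) = (\<chi> j. b j)"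
proof -
  define z where "z = (\<Sum>j\<in>UNIV. b j *\<^sub>R c j)"
  \<comment> \<open>lam z and b both have norm (norm z), while (norm z)^2 \<le> inner (lam z) b.\<close>
  define W where "W = lam z"
  define B :: "(real, 'n) vec" where "B = (\<chi> j. b j)"
  obtain d where d: "jordan_frame jp e UNIV d" and z_d: "z = (\<Sum>i\<in>UNIV. W $ i *\<^sub>R d i)"
    by (rule spectral_decomposition[of z, folded W_def])
  have "inner W W = inner z z"
    by (simp add: z_d inner_frame_combinations[OF d] inner_vec_def)
  moreover have "inner B B = inner z z"
    by (simp add: z_def inner_frame_combinations[OF c] inner_vec_def B_def)
  moreover have "inner z z \<le> inner W B"
    using inner_frame_combinations_le[OF d c antimono_lam[of z, folded W_def] assms(2)]
    by (simp add: z_d[symmetric] z_def[symmetric] inner_vec_def B_def)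
  ultimately have "inner (W - B) (W - B) \<le> 0"
    by (simp add: inner_diff_left inner_diff_right inner_commute)
  then have "inner (W - B) (W - B) = 0"
    using inner_ge_zero[of "W - B"] by linarith
  then show ?thesis
    by (simp add: W_def z_def B_def)
qed

lemma FTvN_lam: "FTvN lam"
  unfolding FTvN_def
proof (intro conjI allI impI)
  fix x
  define l where "l = lam x"
  obtain f where f: "jordan_frame jp e UNIV f" and x_f: "x = (\<Sum>i\<in>UNIV. l $ i *\<^sub>R f i)"
    by (rule spectral_decomposition[of x, folded l_def])
  have "inner x x = inner l l"
    by (simp add: x_f inner_frame_combinations[OF f] inner_vec_def)
  then show "norm (lam x) = norm x"
    by (simp add: l_def norm_eq_sqrt_inner)
next
  fix x y
  define l where "l = lam x"
  define m where "m = lam y"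
  obtain f where f: "jordan_frame jp e UNIV f" and x_f: "x = (\<Sum>i\<in>UNIV. l $ i *\<^sub>R f i)"
    by (rule spectral_decomposition[of x, folded l_def])
  obtain c where c: "jordan_frame jp e UNIV c" and y_c: "y = (\<Sum>i\<in>UNIV. m $ i *\<^sub>R c i)"
    by (rule spectral_decomposition[of y, folded m_def])
  have "inner x y \<le> inner l m"
    using inner_frame_combinations_le[OF f c antimono_lam[of x, folded l_def] antimono_lam[of y, folded m_def]]
    by (simp add: x_f y_c inner_vec_def)
  then show "inner x y \<le> inner (lam x) (lam y)"
    by (simp add: l_def m_def)
next
  fix c q
  assume "q \<in> range lam"
  then have q: "antimono (($) q)"
    using antimono_lam by auto
  define l where "l = lam c"
  obtain f where f: "jordan_frame jp e UNIV f" and c_f: "c = (\<Sum>i\<in>UNIV. l $ i *\<^sub>R f i)"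
    by (rule spectral_decomposition[of c, folded l_def])
  define x where "x = (\<Sum>i\<in>UNIV. q $ i *\<^sub>R f i)"
  have "lam x = q"
    using lam_frame_combination[OF f q] by (simp add: x_def)
  moreover have "inner c x = inner l q"
    by (simp add: c_f x_def inner_frame_combinations[OF f] inner_vec_def)
  ultimately show "\<exists>x. lam x = q \<and> inner c x = inner (lam c) (lam x)"
    by (auto simp: l_def)
qed

lemma range_lam: "range lam = {l. antimono (($) l)}"
proof (intro subset_antisym subsetI)
  fix l :: "(real, 'n) vec"
  assume "l \<in> {l. antimono (($) l)}"
  moreover obtain c :: "'n \<Rightarrow> 'a" where "jordan_frame jp e UNIV c"
    by (rule spectral_decomposition[of 0])
  ultimately have "lam (\<Sum>j\<in>UNIV. l $ j *\<^sub>R c j) = l"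
    using lam_frame_combination by simp
  then show "l \<in> range lam"
    by (metis rangeI)
qed (auto simp: antimono_lam)

lemma mem_convex_hull_eqclass_iff_vec_majorized:
  "x \<in> convex hull {z. lam z = lam y} \<longleftrightarrow> vec_majorized (lam x) (lam y)"
proof -
  have "x \<in> convex hull {z. lam z = lam y} \<longleftrightarrow> (\<forall>a. inner (lam a) (lam x) \<le> inner (lam a) (lam y))"
    using ftvn_majorized_iff_inner_le[OF FTvN_lam] by (simp add: ftvn_majorized_def eqclass_def)
  also have "\<dots> \<longleftrightarrow> (\<forall>l\<in>range lam. inner l (lam x) \<le> inner l (lam y))"
    by blast
  also have "\<dots> \<longleftrightarrow> vec_majorized (lam x) (lam y)"
    by (simp add: range_lam vec_majorized_iff_inner_le[OF antimono_lam antimono_lam])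
  finally show ?thesis .
qed

end

lemma spectral_jordan_algebraI:
  assumes "EJA jp e" "eigenvalue_map jp e lam" "\<forall>u v. inner u v = EJA_trace lam (jp u v)"
  shows "spectral_jordan_algebra jp e lam"
  using assms unfolding EJA_def by unfold_locales auto

theorem corollary10p4:
  shows "(\<forall>(lam :: 'v::euclidean_space \<Rightarrow> 'w::euclidean_space) (mu :: 'w \<Rightarrow> 'w) x y.
            reduced_system mu lam \<longrightarrow>
            (ftvn_majorized lam x y \<longleftrightarrow> ftvn_majorized mu (lam x) (lam y)))
       \<and>
         (\<forall>(jp :: 'a::euclidean_space \<Rightarrow> 'a \<Rightarrow> 'a) e (lam :: 'a \<Rightarrow> (real, 'n::{finite,linorder}) vec) x y.
            EJA_rank jp e CARD('n) \<and>
            eigenvalue_map jp e lam \<and>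
            (\<forall>u v. inner u v = EJA_trace lam (jp u v)) \<longrightarrow>
            (x \<in> convex hull {z. lam z = lam y} \<longleftrightarrow> vec_majorized (lam x) (lam y)))"
proof (intro conjI allI impI)
  fix lam :: "'v::euclidean_space \<Rightarrow> 'w::euclidean_space" and mu :: "'w \<Rightarrow> 'w" and x y
  assume "reduced_system mu lam"
  then show "ftvn_majorized lam x y \<longleftrightarrow> ftvn_majorized mu (lam x) (lam y)"
    by (rule reduced_system_majorized_iff)
next
  fix jp :: "'a::euclidean_space \<Rightarrow> 'a \<Rightarrow> 'a" and e and lam :: "'a \<Rightarrow> (real, 'n::{finite,linorder}) vec" and x y
  assume "EJA_rank jp e CARD('n) \<and> eigenvalue_map jp e lam \<and> (\<forall>u v. inner u v = EJA_trace lam (jp u v))"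
  then have "spectral_jordan_algebra jp e lam"
    by (auto simp: EJA_rank_def intro: spectral_jordan_algebraI)
  then show "x \<in> convex hull {z. lam z = lam y} \<longleftrightarrow> vec_majorized (lam x) (lam y)"
    by (rule spectral_jordan_algebra.mem_convex_hull_eqclass_iff_vec_majorized)
qed

end
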